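(* Let $a$ and $b$ be nonidentity elements of a group $G$ and let $n$ be a positive integer. Then $$\mathrm{cl}([a,b]^n) \le \left\lfloor \frac{n}{2}\right\rfloor - \left\lfloor \frac{n}{\mathrm{ord}(a)}\right\rfloor + 1.$$
   Context: $[x,y]=x^{-1}y^{-1}xy$. The commutator length $\mathrm{cl}(h)$ of an element $h$ of the commutator subgroup is the minimal $k$ such that $h$ is a product of $k$ commutators. $\mathrm{ord}(a)$ is the order of $a$ (possibly $\infty$); if $\mathrm{ord}(a)=\infty$, the term $\lfloor n/\mathrm{ord}(a)\rfloor$ is interpreted as $0$. $\lfloor x\rfloor$ denotes the integer part of $x$. *)

theory Defs
  imports "HOL-Algebra.Multiplicative_Group"
begin

definition commutator :: "('a, 'b) monoid_scheme \<Rightarrow> 'a \<Rightarrow> 'a \<Rightarrow> 'a" where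
  "commutator G x y = inv\<^bsub>G\<^esub> x \<otimes>\<^bsub>G\<^esub> inv\<^bsub>G\<^esub> y \<otimes>\<^bsub>G\<^esub> x \<otimes>\<^bsub>G\<^esub> y"

fun comm_prod :: "('a, 'b) monoid_scheme \<Rightarrow> ('a \<times> 'a) list \<Rightarrow> 'a" where
  "comm_prod G [] = \<one>\<^bsub>G\<^esub>"
| "comm_prod G ((x, y) # ps) = commutator G x y \<otimes>\<^bsub>G\<^esub> comm_prod G ps"

definition prod_of_commutators :: "('a, 'b) monoid_scheme \<Rightarrow> nat \<Rightarrow> 'a \<Rightarrow> bool" where
  "prod_of_commutators G k h \<longleftrightarrow>
     (\<exists>ps. length ps = k \<and> set ps \<subseteq> carrier G \<times> carrier G \<and> h = comm_prod G ps)"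

definition commutator_length :: "('a, 'b) monoid_scheme \<Rightarrow> 'a \<Rightarrow> nat" where
  "commutator_length G h = (LEAST k. prod_of_commutators G k h)"

end

theory Submission
  imports Defs
begin

(* Write x_k = a^-k b a^k. Then [a,b] = x_1^-1 x_0, conjugation by a shifts all indices by one,
   and the elements arc i j = x_i^-1 x_j telescope. Two adjacent factors P Q of a product can be
   replaced, at the cost of one commutator, by the conjugates of Q and P by arbitrary powers of a
   (mult_eq_shift_swap), and cyclic rotation costs nothing. Choosing the powers so that the arcs
   telescope, every commutator spent absorbs two copies of [a,b]: this is Culler's bound
   n div 2 + 1. If a^M = 1, the arcs only depend on their indices modulo M, and a few further
   moves that use this wrap-around save one commutator per M copies of [a,b] when M is even, and
   two per 2M copies when M is odd. *)

context group
begin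

lemma m_inv_cancel_left [simp]: "x \<in> carrier G \<Longrightarrow> y \<in> carrier G \<Longrightarrow> x \<otimes> (inv x \<otimes> y) = y"
  by (simp add: m_assoc[symmetric])

lemma inv_m_cancel_left [simp]: "x \<in> carrier G \<Longrightarrow> y \<in> carrier G \<Longrightarrow> inv x \<otimes> (x \<otimes> y) = y"
  by (simp add: m_assoc[symmetric])

lemma nat_pow_split3:
  "x \<in> carrier G \<Longrightarrow> n = p + q + r \<Longrightarrow>
   x [^] (n::nat) = x [^] (p::nat) \<otimes> x [^] (q::nat) \<otimes> x [^] (r::nat)"
  by (simp add: nat_pow_mult)

lemma commutator_closed [simp]:
  "x \<in> carrier G \<Longrightarrow> y \<in> carrier G \<Longrightarrow> commutator G x y \<in> carrier G"
  by (simp add: commutator_def)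

lemma comm_prod_closed:
  "set ps \<subseteq> carrier G \<times> carrier G \<Longrightarrow> comm_prod G ps \<in> carrier G"
  by (induction ps) auto

lemma comm_prod_append:
  "set ps \<subseteq> carrier G \<times> carrier G \<Longrightarrow> set qs \<subseteq> carrier G \<times> carrier G \<Longrightarrow>
   comm_prod G (ps @ qs) = comm_prod G ps \<otimes> comm_prod G qs"
  by (induction ps) (auto simp: m_assoc comm_prod_closed)

lemma commutator_conj:
  assumes "x \<in> carrier G" "y \<in> carrier G" "g \<in> carrier G"
  shows "commutator G (inv g \<otimes> x \<otimes> g) (inv g \<otimes> y \<otimes> g) = inv g \<otimes> commutator G x y \<otimes> g"
  using assms by (simp add: commutator_def inv_mult_group m_assoc)

lemma comm_prod_conj:
  assumes "set ps \<subseteq> carrier G \<times> carrier G" "g \<in> carrier G"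
  shows "comm_prod G (map (\<lambda>(x, y). (inv g \<otimes> x \<otimes> g, inv g \<otimes> y \<otimes> g)) ps)
           = inv g \<otimes> comm_prod G ps \<otimes> g"
  using assms
proof (induction ps)
  case (Cons p ps)
  obtain x y where p: "p = (x, y)" and xy: "x \<in> carrier G" "y \<in> carrier G"
    using Cons.prems by (cases p) auto
  have ps: "comm_prod G ps \<in> carrier G"
    using Cons.prems by (auto intro: comm_prod_closed)
  have "commutator G (inv g \<otimes> x \<otimes> g) (inv g \<otimes> y \<otimes> g) = inv g \<otimes> commutator G x y \<otimes> g"
    using xy Cons.prems by (simp add: commutator_conj)
  then show ?case
    using Cons xy ps by (simp add: p m_assoc)
qed simp

lemma prod_of_commutators_closed:
  "prod_of_commutators G k h \<Longrightarrow> h \<in> carrier G"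
  by (auto simp: prod_of_commutators_def comm_prod_closed)

lemma prod_of_commutators_one: "prod_of_commutators G 0 \<one>"
  by (auto simp: prod_of_commutators_def)

lemma prod_of_commutators_commutator:
  "x \<in> carrier G \<Longrightarrow> y \<in> carrier G \<Longrightarrow> prod_of_commutators G 1 (commutator G x y)"
  unfolding prod_of_commutators_def
  by (rule exI[of _ "[(x, y)]"]) (simp add: commutator_def)

lemma prod_of_commutators_mult:
  "prod_of_commutators G k x \<Longrightarrow> prod_of_commutators G l y \<Longrightarrow>
   prod_of_commutators G (k + l) (x \<otimes> y)"
  unfolding prod_of_commutators_def
  by (metis comm_prod_append length_append set_append Un_subset_iff)

lemma prod_of_commutators_conj:
  assumes "prod_of_commutators G k x" "g \<in> carrier G"
  shows "prod_of_commutators G k (inv g \<otimes> x \<otimes> g)"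
proof -
  obtain ps where ps: "length ps = k" "set ps \<subseteq> carrier G \<times> carrier G" "x = comm_prod G ps"
    using assms(1) by (auto simp: prod_of_commutators_def)
  let ?qs = "map (\<lambda>(x, y). (inv g \<otimes> x \<otimes> g, inv g \<otimes> y \<otimes> g)) ps"
  have "set ?qs \<subseteq> carrier G \<times> carrier G"
    using ps(2) assms(2) by auto
  with ps assms(2) show ?thesis
    unfolding prod_of_commutators_def by (intro exI[of _ ?qs]) (simp add: comm_prod_conj)
qed

lemma prod_of_commutators_mono:
  assumes "prod_of_commutators G k x" "k \<le> l"
  shows "prod_of_commutators G l x"
proof -
  have "comm_prod G (replicate j (\<one>, \<one>)) = \<one>" for j
    by (induction j) (auto simp: commutator_def)
  then have "prod_of_commutators G (l - k) \<one>"
    unfolding prod_of_commutators_def by (intro exI[of _ "replicate (l - k) (\<one>, \<one>)"]) auto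
  from prod_of_commutators_mult[OF assms(1) this] show ?thesis
    using assms(2) prod_of_commutators_closed[OF assms(1)] by simp
qed

lemma prod_of_commutators_rotate:
  assumes "prod_of_commutators G k (y \<otimes> x)" "x \<in> carrier G" "y \<in> carrier G"
  shows "prod_of_commutators G k (x \<otimes> y)"
  using prod_of_commutators_conj[OF assms(1), of "inv x"] assms(2,3) by (simp add: m_assoc)

lemma prod_of_commutators_insert:
  assumes "prod_of_commutators G k (v \<otimes> u)"
    and "u \<in> carrier G" "v \<in> carrier G" "x \<in> carrier G" "y \<in> carrier G"
  shows "prod_of_commutators G (Suc k) (u \<otimes> commutator G x y \<otimes> v)"
proof -
  have "prod_of_commutators G (1 + k) (commutator G x y \<otimes> (v \<otimes> u))"
    using assms by (intro prod_of_commutators_mult prod_of_commutators_commutator)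
  then have "prod_of_commutators G (Suc k) ((commutator G x y \<otimes> v) \<otimes> u)"
    using assms by (simp add: m_assoc)
  from prod_of_commutators_rotate[OF this] show ?thesis
    using assms by (simp add: m_assoc)
qed

lemma commutator_length_le:
  "prod_of_commutators G k h \<Longrightarrow> commutator_length G h \<le> k"
  unfolding commutator_length_def by (rule Least_le)

end

locale commutator_powers = group G for G (structure) +
  fixes a b
  assumes a_closed [simp]: "a \<in> carrier G" and b_closed [simp]: "b \<in> carrier G"
begin

abbreviation \<gamma> :: 'a where "\<gamma> \<equiv> commutator G a b"

definition shift :: "int \<Rightarrow> 'a \<Rightarrow> 'a" where
  "shift k x = inv (a [^] k) \<otimes> x \<otimes> a [^] k"

definition arc :: "int \<Rightarrow> int \<Rightarrow> 'a" where
  "arc i j = inv (shift i b) \<otimes> shift j b"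

lemma a_pow_mult_assoc: "z \<in> carrier G \<Longrightarrow> a [^] (i::int) \<otimes> (a [^] (j::int) \<otimes> z) = a [^] (i + j) \<otimes> z"
  by (simp add: m_assoc[symmetric] int_pow_mult)

lemmas a_pow_simps = int_pow_neg[symmetric] int_pow_mult[symmetric] a_pow_mult_assoc inv_mult_group m_assoc

lemma shift_closed [simp]: "x \<in> carrier G \<Longrightarrow> shift k x \<in> carrier G"
  by (simp add: shift_def)

lemma shift_mult: "x \<in> carrier G \<Longrightarrow> y \<in> carrier G \<Longrightarrow> shift k (x \<otimes> y) = shift k x \<otimes> shift k y"
  by (simp add: shift_def m_assoc)

lemma shift_inv: "x \<in> carrier G \<Longrightarrow> shift k (inv x) = inv (shift k x)"
  by (simp add: shift_def inv_mult_group m_assoc)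

lemma shift_shift: "x \<in> carrier G \<Longrightarrow> shift k (shift l x) = shift (l + k) x"
  by (simp add: shift_def a_pow_simps add.commute)

lemma shift_zero [simp]: "x \<in> carrier G \<Longrightarrow> shift 0 x = x"
  by (simp add: shift_def)

lemma shift_nat_pow: "x \<in> carrier G \<Longrightarrow> shift k (x [^] (n::nat)) = shift k x [^] n"
  by (induction n) (simp_all add: shift_def shift_mult[unfolded shift_def])

lemma mult_eq_shift_swap:
  assumes "x \<in> carrier G" "y \<in> carrier G"
  shows "x \<otimes> y = shift k y \<otimes> shift l x \<otimes> commutator G (a [^] k \<otimes> shift l x) (a [^] (- l) \<otimes> y)"
  using assms by (simp add: shift_def commutator_def a_pow_simps)

lemma arc_closed [simp]: "arc i j \<in> carrier G"
  by (simp add: arc_def)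

lemma arc_trans: "arc i j \<otimes> arc j k = arc i k"
  by (simp add: arc_def m_assoc)

lemma arc_trans_assoc: "x \<in> carrier G \<Longrightarrow> arc i j \<otimes> (arc j k \<otimes> x) = arc i k \<otimes> x"
  by (simp add: arc_trans m_assoc[symmetric])

lemma arc_self [simp]: "arc i i = \<one>"
  by (simp add: arc_def)

lemma inv_arc: "inv (arc i j) = arc j i"
  by (simp add: arc_def inv_mult_group)

lemma shift_arc: "shift k (arc i j) = arc (i + k) (j + k)"
  by (simp add: arc_def shift_mult shift_inv shift_shift)

lemma commutator_eq_arc: "\<gamma> = arc 1 0"
  by (simp add: arc_def shift_def commutator_def m_assoc inv_mult_group)

lemma shift_commutator: "shift k \<gamma> = arc (k + 1) k"
  by (simp add: commutator_eq_arc shift_arc add.commute)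

lemma prod_of_commutators_shift:
  "prod_of_commutators G n x \<Longrightarrow> prod_of_commutators G n (shift k x)"
  unfolding shift_def by (rule prod_of_commutators_conj) simp_all

lemma commutator_a_left: "x \<in> carrier G \<Longrightarrow> commutator G a x = inv (shift 1 x) \<otimes> x"
  by (simp add: commutator_def shift_def m_assoc inv_mult_group)

lemma prod_of_commutators_arc: "prod_of_commutators G 1 (arc i j)"
proof -
  have "arc i j = shift i (commutator G b (a [^] (j - i)))"
    by (simp add: arc_def shift_def commutator_def a_pow_simps)
  moreover have "prod_of_commutators G 1 (shift i (commutator G b (a [^] (j - i))))"
    by (intro prod_of_commutators_shift prod_of_commutators_commutator) simp_all
  ultimately show ?thesis
    by simp
qed

lemma prod_of_commutators_swap:
  assumes "prod_of_commutators G n (v \<otimes> shift k y \<otimes> shift l x)"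
    and "x \<in> carrier G" "y \<in> carrier G" "v \<in> carrier G"
  shows "prod_of_commutators G (Suc n) (x \<otimes> y \<otimes> v)"
proof -
  have "x \<otimes> y \<otimes> v
      = (shift k y \<otimes> shift l x) \<otimes> commutator G (a [^] k \<otimes> shift l x) (a [^] (- l) \<otimes> y) \<otimes> v"
    using assms by (simp add: mult_eq_shift_swap[of x y k l] m_assoc)
  with prod_of_commutators_insert[of n v "shift k y \<otimes> shift l x"] assms show ?thesis
    by (simp add: m_assoc)
qed

lemma prod_of_commutators_extend:
  assumes "prod_of_commutators G n (v \<otimes> arc j (j - 2))" "v \<in> carrier G"
  shows "prod_of_commutators G (Suc n) (\<gamma> \<otimes> \<gamma> \<otimes> v)"
proof (rule prod_of_commutators_swap[where k = "j - 1" and l = "j - 2"])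
  have "v \<otimes> shift (j - 1) \<gamma> \<otimes> shift (j - 2) \<gamma> = v \<otimes> arc j (j - 2)"
    using assms(2) by (simp add: shift_commutator m_assoc arc_trans)
  with assms show "prod_of_commutators G n (v \<otimes> shift (j - 1) \<gamma> \<otimes> shift (j - 2) \<gamma>)"
    by simp
qed (use assms in simp_all)

lemma prod_of_commutators_extend_chain:
  assumes "prod_of_commutators G n (\<gamma> [^] N \<otimes> w \<otimes> arc i (j - 2 * int d))" "w \<in> carrier G"
  shows "prod_of_commutators G (n + d) (\<gamma> [^] (N + 2 * d) \<otimes> w \<otimes> arc i j)"
  using assms(1)
proof (induction d arbitrary: n j)
  case (Suc d)
  have "prod_of_commutators G n (\<gamma> [^] N \<otimes> w \<otimes> arc i ((j - 2) - 2 * int d))"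
    using Suc.prems by (simp add: algebra_simps)
  from Suc.IH[OF this]
  have "prod_of_commutators G (n + d) ((\<gamma> [^] (N + 2 * d) \<otimes> w \<otimes> arc i j) \<otimes> arc j (j - 2))"
    using assms(2) by (simp add: m_assoc arc_trans)
  moreover have "\<gamma> [^] (N + 2 * Suc d) = \<gamma> [^] (1::nat) \<otimes> \<gamma> [^] (1::nat) \<otimes> \<gamma> [^] (N + 2 * d)"
    by (rule nat_pow_split3) simp_all
  ultimately show ?case
    using prod_of_commutators_extend assms(2) by (simp add: m_assoc)
qed simp

lemma commutator_mult_arc: "\<gamma> \<otimes> arc 0 j = arc 1 j"
  by (simp add: commutator_eq_arc arc_trans)

lemma prod_of_commutators_odd_power_arc:
  "prod_of_commutators G (Suc d) (\<gamma> [^] (2 * d + 1) \<otimes> arc 0 j)"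
proof -
  have "prod_of_commutators G 1 (\<gamma> [^] (1::nat) \<otimes> \<one> \<otimes> arc 0 (j - 2 * int d))"
    using prod_of_commutators_arc[of 1 "j - 2 * int d"] by (simp add: commutator_mult_arc)
  from prod_of_commutators_extend_chain[OF this] show ?thesis
    by simp
qed

lemma prod_of_commutators_power: "prod_of_commutators G (n div 2 + 1) (\<gamma> [^] n)"
proof (cases "even n")
  case True
  show ?thesis
  proof (cases n)
    case 0
    then show ?thesis
      using prod_of_commutators_mono[OF prod_of_commutators_one] by simp
  next
    case (Suc m)
    with True obtain d where d: "m = 2 * d + 1"
      by (metis even_Suc oddE)
    have "prod_of_commutators G (Suc d + 1) (\<gamma> [^] (2 * d + 1) \<otimes> \<gamma>)"
      using prod_of_commutators_odd_power_arc[of d 0]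
      by (intro prod_of_commutators_mult prod_of_commutators_commutator) simp_all
    with Suc d show ?thesis
      by simp
  qed
next
  case False
  then obtain d where "n = 2 * d + 1"
    using oddE by blast
  with prod_of_commutators_odd_power_arc[of d 0] show ?thesis
    by simp
qed

lemma prod_of_commutators_untwist:
  assumes "prod_of_commutators G n (\<gamma> [^] (N::nat) \<otimes> arc 0 (-1))"
  shows "prod_of_commutators G (Suc n) (\<gamma> [^] (N + 2))"
proof -
  define w where "w = b \<otimes> inv (shift (-1) b) \<otimes> b"
  have w: "w \<in> carrier G"
    by (simp add: w_def)
  have "\<gamma> \<otimes> \<gamma> = commutator G a w \<otimes> arc 0 (-1)"
    by (simp add: commutator_a_left w w_def commutator_eq_arc arc_def shift_mult shift_inv shift_shift
        inv_mult_group m_assoc)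
  then have "\<gamma> [^] (N + 2) = \<gamma> [^] N \<otimes> commutator G a w \<otimes> arc 0 (-1)"
    using nat_pow_split3[of \<gamma> "N + 2" N 1 1] w by (simp add: m_assoc)
  moreover have "prod_of_commutators G n (arc 0 (-1) \<otimes> \<gamma> [^] N)"
    using assms by (rule prod_of_commutators_rotate) simp_all
  then have "prod_of_commutators G (Suc n) (\<gamma> [^] N \<otimes> commutator G a w \<otimes> arc 0 (-1))"
    using w by (intro prod_of_commutators_insert) simp_all
  ultimately show ?thesis
    by simp
qed

lemma commutator_power_Suc_mult_arc:
  "\<gamma> [^] (Suc n) \<otimes> arc 0 j = \<gamma> [^] n \<otimes> arc 1 j"
  by (simp add: m_assoc commutator_mult_arc)

(* Since arc 0 (-1) = shift (-1) \<gamma>,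
   the exponent e \<in> {0, 1} lets one statement start from a power of \<gamma> or from a "twisted" power
   \<gamma>^N \<otimes> shift (-1) \<gamma>. *)
lemma prod_of_commutators_jump:
  assumes "prod_of_commutators G n (\<gamma> [^] (N::nat) \<otimes> arc 0 (-1) [^] (e::nat))"
    and "v \<otimes> arc 3 2 [^] q \<otimes> arc 2 1 [^] p = inv g \<otimes> (arc 3 2 [^] N \<otimes> arc 2 1 [^] e) \<otimes> g"
    and "v \<in> carrier G" "g \<in> carrier G" "m = p + q"
  shows "prod_of_commutators G (Suc n) (\<gamma> [^] (m::nat) \<otimes> v)"
proof -
  have "shift 2 (\<gamma> [^] N \<otimes> arc 0 (-1) [^] e) = arc 3 2 [^] N \<otimes> arc 2 1 [^] e"
    by (simp add: shift_mult shift_nat_pow shift_commutator shift_arc)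
  moreover have "prod_of_commutators G n (inv g \<otimes> shift 2 (\<gamma> [^] N \<otimes> arc 0 (-1) [^] e) \<otimes> g)"
    using assms(1,4) by (intro prod_of_commutators_conj prod_of_commutators_shift)
  ultimately have "prod_of_commutators G n (v \<otimes> shift 2 (\<gamma> [^] q) \<otimes> shift 1 (\<gamma> [^] p))"
    using assms(2) by (simp add: shift_nat_pow shift_commutator)
  from prod_of_commutators_swap[OF this] show ?thesis
    using assms(3,5) by (simp add: nat_pow_mult)
qed

lemma arc_pow_Suc: "arc i j [^] (Suc n) = arc i j \<otimes> arc i j [^] n"
  using nat_pow_Suc2[of "arc i j" n] by simp

lemma prod_of_commutators_jump_arc_2:
  assumes "prod_of_commutators G n (\<gamma> [^] (N::nat) \<otimes> arc 0 (-1) [^] (e::nat))"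
  shows "prod_of_commutators G (Suc n) (\<gamma> [^] (N + e + 2) \<otimes> arc 0 2)"
proof -
  have "arc 1 2 \<otimes> arc 3 2 [^] N \<otimes> arc 2 1 [^] Suc e
      = inv (arc 2 1) \<otimes> (arc 3 2 [^] N \<otimes> arc 2 1 [^] e) \<otimes> arc 2 1"
    by (simp add: inv_arc m_assoc)
  from prod_of_commutators_jump[OF assms this, of "N + e + 1"]
  have "prod_of_commutators G (Suc n) (\<gamma> [^] (N + e + 1) \<otimes> arc 1 2)"
    by simp
  moreover have "N + e + 2 = Suc (N + e + 1)"
    by simp
  ultimately show ?thesis
    by (simp only: commutator_power_Suc_mult_arc)
qed

lemma prod_of_commutators_jump_arc_3:
  assumes "prod_of_commutators G n (\<gamma> [^] (N::nat) \<otimes> arc 0 (-1) [^] (e::nat))"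
  shows "prod_of_commutators G (Suc n) (\<gamma> [^] (N + e + 3) \<otimes> arc 0 3)"
proof -
  have "arc 1 3 \<otimes> arc 3 2 [^] Suc N \<otimes> arc 2 1 [^] Suc e
      = inv (arc 2 1) \<otimes> (arc 3 2 [^] N \<otimes> arc 2 1 [^] e) \<otimes> arc 2 1"
    unfolding arc_pow_Suc[of 3 2] by (simp add: inv_arc m_assoc arc_trans_assoc)
  from prod_of_commutators_jump[OF assms this, of "N + e + 2"]
  have "prod_of_commutators G (Suc n) (\<gamma> [^] (N + e + 2) \<otimes> arc 1 3)"
    by simp
  moreover have "N + e + 3 = Suc (N + e + 2)"
    by simp
  ultimately show ?thesis
    by (simp only: commutator_power_Suc_mult_arc)
qed

lemma prod_of_commutators_jump_arcs_2_3:
  assumes "prod_of_commutators G n (\<gamma> [^] (N::nat) \<otimes> arc 0 (-1) [^] (e::nat))"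
  shows "prod_of_commutators G (Suc n) (\<gamma> [^] (N + e + 4) \<otimes> arc 0 2 \<otimes> arc 1 3)"
proof -
  have "arc 1 2 \<otimes> arc 1 3 \<otimes> arc 3 2 [^] Suc N \<otimes> arc 2 1 [^] Suc (Suc e)
      = inv (arc 2 1 \<otimes> arc 2 1) \<otimes> (arc 3 2 [^] N \<otimes> arc 2 1 [^] e) \<otimes> (arc 2 1 \<otimes> arc 2 1)"
    unfolding arc_pow_Suc[of 3 2] by (simp add: inv_arc inv_mult_group m_assoc arc_trans_assoc)
  from prod_of_commutators_jump[OF assms this, of "N + e + 3"]
  have "prod_of_commutators G (Suc n) (\<gamma> [^] (N + e + 3) \<otimes> (arc 1 2 \<otimes> arc 1 3))"
    by simp
  moreover have "\<gamma> [^] (N + e + 4) \<otimes> arc 0 2 \<otimes> arc 1 3 = \<gamma> [^] (N + e + 3) \<otimes> (arc 1 2 \<otimes> arc 1 3)"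
    using commutator_power_Suc_mult_arc[of "N + e + 3" 2] by (simp add: m_assoc[symmetric] add_ac)
  ultimately show ?thesis
    by simp
qed

(* p is half the period and s the number of commutators saved per period. *)
lemma prod_of_commutators_twisted_by_period:
  assumes base: "prod_of_commutators G (p - s) (\<gamma> [^] (2 * p - 1) \<otimes> arc 0 (-1))"
    and step: "\<And>k N. prod_of_commutators G k (\<gamma> [^] N \<otimes> arc 0 (-1)) \<Longrightarrow>
      prod_of_commutators G (k + (p - s)) (\<gamma> [^] (N + 2 * p) \<otimes> arc 0 (-1))"
    and "0 < p" "s \<le> p" "odd N"
  shows "prod_of_commutators G ((N + 1) div 2 - s * ((N + 1) div (2 * p))) (\<gamma> [^] N \<otimes> arc 0 (-1))"
  using \<open>odd N\<close>
proof (induction N rule: less_induct)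
  case (less N)
  then obtain d where d: "N = 2 * d + 1"
    using oddE by blast
  consider "N + 1 < 2 * p" | "N + 1 = 2 * p" | "2 * p < N + 1"
    by linarith
  then show ?case
  proof cases
    case 1
    then show ?thesis
      using prod_of_commutators_odd_power_arc[of d "-1"] by (simp add: d)
  next
    case 2
    then have "N = 2 * p - 1" "(N + 1) div 2 = p" "(N + 1) div (2 * p) = 1"
      using \<open>0 < p\<close> by simp_all
    then show ?thesis
      using base by simp
  next
    case 3
    define N' where "N' = N - 2 * p"
    have N: "N = N' + 2 * p" and "N' < N" "odd N'"
      using 3 \<open>0 < p\<close> less.prems by (auto simp: N'_def)
    define q where "q = (N' + 1) div (2 * p)"
    have "q * (2 * p) \<le> N' + 1"
      unfolding q_def by (rule div_times_less_eq_dividend)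
    then have "p * q \<le> (N' + 1) div 2"
      by (simp add: less_eq_div_iff_mult_less_eq ac_simps)
    then have sq: "s * q \<le> (N' + 1) div 2"
      using \<open>s \<le> p\<close> by (meson order.trans mult_le_mono1)
    have e: "N + 1 = (N' + 1) + 2 * p"
      by (simp add: N)
    have divs: "(N + 1) div 2 = (N' + 1) div 2 + p" "(N + 1) div (2 * p) = q + 1"
      unfolding e q_def using \<open>0 < p\<close> by (simp_all only: div_add_self2 div_mult_self2)
    have "prod_of_commutators G ((N' + 1) div 2 - s * q + (p - s)) (\<gamma> [^] N \<otimes> arc 0 (-1))"
      using step[OF less.IH[OF \<open>N' < N\<close> \<open>odd N'\<close>]] by (simp add: N q_def)
    moreover have "(N' + 1) div 2 - s * q + (p - s) = (N + 1) div 2 - s * ((N + 1) div (2 * p))"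
      using divs sq \<open>s \<le> p\<close> by (simp add: distrib_left)
    ultimately show ?thesis
      by simp
  qed
qed

lemma prod_of_commutators_power_Suc_odd:
  assumes "prod_of_commutators G (n div 2 + 1 - n div M) (\<gamma> [^] n)"
    and "odd n" "\<not> M dvd Suc n" "2 \<le> M"
  shows "prod_of_commutators G (Suc n div 2 + 1 - Suc n div M) (\<gamma> [^] Suc n)"
proof -
  have "Suc n div M = n div M"
    using assms(3) by (simp add: div_Suc dvd_eq_mod_eq_0)
  moreover have "Suc n div 2 = n div 2 + 1"
    using assms(2) by (auto elim: oddE)
  moreover have "n div M \<le> n div 2"
    using assms(4) by (simp add: div_le_mono2)
  moreover have "prod_of_commutators G (n div 2 + 1 - n div M + 1) (\<gamma> [^] n \<otimes> \<gamma>)"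
    using assms(1) by (intro prod_of_commutators_mult prod_of_commutators_commutator) simp_all
  ultimately show ?thesis
    by (simp add: Suc_diff_le)
qed

lemma prod_of_commutators_power_by_cases:
  assumes "2 \<le> M"
    and odd: "\<And>m. odd m \<Longrightarrow> prod_of_commutators G (m div 2 + 1 - m div M) (\<gamma> [^] m)"
    and multiple: "\<And>q. even (M * Suc q) \<Longrightarrow>
      prod_of_commutators G (M * Suc q div 2 + 1 - Suc q) (\<gamma> [^] (M * Suc q))"
  shows "prod_of_commutators G (n div 2 + 1 - n div M) (\<gamma> [^] n)"
proof (cases "odd n")
  case False
  consider "n = 0" | "\<not> M dvd n" "n \<noteq> 0" | q where "n = M * Suc q"
    by (metis dvd_def not0_implies_Suc mult_0_right)
  then show ?thesis
  proof cases
    case 1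
    then show ?thesis
      using prod_of_commutators_mono[OF prod_of_commutators_one] by simp
  next
    case 2
    then obtain m where n: "n = Suc m" and "odd m"
      using False by (metis even_Suc not0_implies_Suc)
    show ?thesis
      using prod_of_commutators_power_Suc_odd[OF odd[OF \<open>odd m\<close>] \<open>odd m\<close>] 2 assms(1)
      by (simp add: n)
  next
    case (3 q)
    then show ?thesis
      using multiple[of q] False assms(1) by simp
  qed
qed (rule odd)

end

locale commutator_powers_torsion = commutator_powers +
  fixes M :: nat
  assumes a_pow_period: "a [^] M = \<one>"
begin

lemma arc_add_period: "arc i (j + int M) = arc i j"
proof -
  have "a [^] (j + int M) = a [^] j"
    using a_pow_period by (simp add: int_pow_mult int_pow_int)
  then show ?thesis
    by (simp add: arc_def shift_def)
qed

lemma prod_of_commutators_extend_chain_period: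
  assumes "prod_of_commutators G n (\<gamma> [^] N \<otimes> w \<otimes> arc i j')" "w \<in> carrier G"
    and "j' + 2 * int d = j + int M" "N' = N + 2 * d" "n' = n + d"
  shows "prod_of_commutators G n' (\<gamma> [^] N' \<otimes> w \<otimes> arc i j)"
proof -
  have "j' = (j - 2 * int d) + int M"
    using assms(3) by simp
  then have "arc i j' = arc i (j - 2 * int d)"
    by (simp only: arc_add_period)
  with assms show ?thesis
    by (simp add: prod_of_commutators_extend_chain)
qed

lemma prod_of_commutators_extend_chain_period_arc:
  assumes "prod_of_commutators G n (\<gamma> [^] N \<otimes> arc 0 j')"
    and "j' + 2 * int d = j + int M" "N' = N + 2 * d" "n' = n + d"
  shows "prod_of_commutators G n' (\<gamma> [^] N' \<otimes> arc 0 j)"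
  using prod_of_commutators_extend_chain_period[of n N \<one> 0 j' d j N' n'] assms by simp

lemma prod_of_commutators_power_add_odd_period:
  assumes "odd M" "prod_of_commutators G k (\<gamma> [^] (N::nat))"
  shows "prod_of_commutators G (k + M div 2) (\<gamma> [^] (N + M))"
proof -
  have "prod_of_commutators G k (\<gamma> [^] (Suc N) \<otimes> arc 0 1)"
    unfolding commutator_power_Suc_mult_arc using assms(2) by simp
  then show ?thesis
    by (rule prod_of_commutators_extend_chain_period_arc[where d = "M div 2" and j = 0, simplified])
      (use assms(1) in \<open>auto elim!: oddE\<close>)
qed

lemma prod_of_commutators_twisted_period_pred:
  assumes "even M" "2 \<le> M"
  shows "prod_of_commutators G (M div 2 - 1) (\<gamma> [^] (M - 1) \<otimes> arc 0 (-1))"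
proof -
  have "prod_of_commutators G 0 (\<gamma> [^] (Suc 0) \<otimes> arc 0 1)"
    unfolding commutator_power_Suc_mult_arc by (simp add: prod_of_commutators_one)
  then show ?thesis
    by (rule prod_of_commutators_extend_chain_period_arc[where d = "M div 2 - 1"])
      (use assms in \<open>auto elim!: evenE\<close>)
qed

lemma prod_of_commutators_untwist_even_period:
  assumes "even M" "2 \<le> M" "prod_of_commutators G k (\<gamma> [^] (N::nat) \<otimes> arc 0 (-1) [^] (e::nat))"
  shows "prod_of_commutators G (k + M div 2) (\<gamma> [^] (N + e + M))"
  by (rule prod_of_commutators_extend_chain_period_arc[OF prod_of_commutators_jump_arc_2[OF assms(3)],
        where d = "M div 2 - 1" and j = 0, simplified])
    (use assms(1,2) in \<open>auto elim!: evenE\<close>)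

lemma prod_of_commutators_twisted_add_even_period:
  assumes "even M" "4 \<le> M" "prod_of_commutators G k (\<gamma> [^] (N::nat) \<otimes> arc 0 (-1))"
  shows "prod_of_commutators G (k + (M div 2 - 1)) (\<gamma> [^] (N + M) \<otimes> arc 0 (-1))"
proof -
  have "prod_of_commutators G k (\<gamma> [^] N \<otimes> arc 0 (-1) [^] (1::nat))"
    using assms(3) by simp
  then show ?thesis
    by (rule prod_of_commutators_extend_chain_period_arc[OF prod_of_commutators_jump_arc_3, where d = "M div 2 - 2"])
      (use assms(1,2) in \<open>auto elim!: evenE\<close>)
qed

lemma prod_of_commutators_untwist_odd_period:
  assumes "odd M" "3 \<le> M" "prod_of_commutators G k (\<gamma> [^] (N::nat) \<otimes> arc 0 (-1))"
  shows "prod_of_commutators G (k + M div 2) (\<gamma> [^] (N + M + 1))"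
proof -
  have "prod_of_commutators G k (\<gamma> [^] N \<otimes> arc 0 (-1) [^] (1::nat))"
    using assms(3) by simp
  then show ?thesis
    by (rule prod_of_commutators_extend_chain_period_arc[OF prod_of_commutators_jump_arc_3,
          where d = "M div 2 - 1" and j = 0, simplified])
      (use assms(1,2) in \<open>auto elim!: oddE\<close>)
qed

lemma prod_of_commutators_twisted_add_odd_period:
  assumes "odd M" "3 \<le> M" "prod_of_commutators G k (\<gamma> [^] (N::nat) \<otimes> arc 0 (-1) [^] (e::nat))"
  shows "prod_of_commutators G (k + (M - 2)) (\<gamma> [^] (N + e + 2 * M - 1) \<otimes> arc 0 (-1))"
proof -
  define d where "d = M div 2 - 1"
  have M: "M = 2 * d + 3"
    using assms(1,2) by (auto simp: d_def elim!: oddE)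
  have "prod_of_commutators G (Suc k + d) (\<gamma> [^] (N + e + 4 + 2 * d) \<otimes> arc 0 2 \<otimes> arc 1 0)"
    by (rule prod_of_commutators_extend_chain_period[OF prod_of_commutators_jump_arcs_2_3[OF assms(3)]])
      (simp_all add: M)
  then have "prod_of_commutators G (Suc k + d) (arc 1 0 \<otimes> (\<gamma> [^] (N + e + 4 + 2 * d) \<otimes> arc 0 2))"
    by (rule prod_of_commutators_rotate) simp_all
  moreover have "N + e + 5 + 2 * d = Suc (N + e + 4 + 2 * d)"
    by simp
  then have "\<gamma> [^] (N + e + 5 + 2 * d) = \<gamma> \<otimes> \<gamma> [^] (N + e + 4 + 2 * d)"
    by (simp only: nat_pow_Suc2 commutator_closed a_closed b_closed)
  ultimately have "prod_of_commutators G (Suc k + d) (\<gamma> [^] (N + e + 5 + 2 * d) \<otimes> arc 0 2)"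
    by (simp add: m_assoc flip: commutator_eq_arc)
  then show ?thesis
    by (rule prod_of_commutators_extend_chain_period_arc[where d = d]) (simp_all add: M)
qed

lemma prod_of_commutators_twisted_even_period:
  assumes "even M" "4 \<le> M" "odd N"
  shows "prod_of_commutators G ((N + 1) div 2 - (N + 1) div M) (\<gamma> [^] N \<otimes> arc 0 (-1))"
proof -
  have M: "2 * (M div 2) = M"
    using assms(1) by simp
  have "prod_of_commutators G ((N + 1) div 2 - 1 * ((N + 1) div (2 * (M div 2)))) (\<gamma> [^] N \<otimes> arc 0 (-1))"
  proof (rule prod_of_commutators_twisted_by_period)
    show "prod_of_commutators G (M div 2 - 1) (\<gamma> [^] (2 * (M div 2) - 1) \<otimes> arc 0 (-1))"
      unfolding M using assms by (intro prod_of_commutators_twisted_period_pred) simp_all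
    show "prod_of_commutators G (k + (M div 2 - 1)) (\<gamma> [^] (K + 2 * (M div 2)) \<otimes> arc 0 (-1))"
      if "prod_of_commutators G k (\<gamma> [^] K \<otimes> arc 0 (-1))" for k K
      unfolding M using assms that by (intro prod_of_commutators_twisted_add_even_period)
  qed (use assms in simp_all)
  then show ?thesis
    by (simp add: M)
qed

lemma prod_of_commutators_twisted_odd_period:
  assumes "odd M" "3 \<le> M" "odd N"
  shows "prod_of_commutators G ((N + 1) div 2 - 2 * ((N + 1) div (2 * M))) (\<gamma> [^] N \<otimes> arc 0 (-1))"
proof (rule prod_of_commutators_twisted_by_period)
  have "prod_of_commutators G 0 (\<gamma> [^] (0::nat) \<otimes> arc 0 (-1) [^] (0::nat))"
    by (simp add: prod_of_commutators_one)
  from prod_of_commutators_twisted_add_odd_period[OF assms(1,2) this]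
  show "prod_of_commutators G (M - 2) (\<gamma> [^] (2 * M - 1) \<otimes> arc 0 (-1))"
    by simp
  show "prod_of_commutators G (k + (M - 2)) (\<gamma> [^] (K + 2 * M) \<otimes> arc 0 (-1))"
    if "prod_of_commutators G k (\<gamma> [^] K \<otimes> arc 0 (-1))" for k K
    using prod_of_commutators_twisted_add_odd_period[OF assms(1,2), of k K 1] that assms(2) by simp
qed (use assms in simp_all)

lemma prod_of_commutators_odd_power_even_period:
  assumes "even M" "4 \<le> M" "odd n"
  shows "prod_of_commutators G (n div 2 + 1 - n div M) (\<gamma> [^] n)"
proof (cases "n = 1")
  case True
  then show ?thesis
    using assms(2) prod_of_commutators_commutator[OF a_closed b_closed] by simp
next
  case False
  define N where "N = n - 2"
  have n: "n = Suc (Suc N)" and "odd N"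
    using assms(3) False by (auto simp: N_def elim!: oddE)
  have "\<not> M dvd n"
    using assms(1,3) dvd_trans by blast
  then have "Suc N div M = n div M"
    by (simp add: n div_Suc dvd_eq_mod_eq_0)
  moreover have "Suc N div 2 = n div 2"
    using \<open>odd N\<close> by (auto simp: n elim!: oddE)
  moreover have "Suc N div M \<le> Suc N div 2"
    using assms(2) by (simp add: div_le_mono2)
  moreover have "prod_of_commutators G (Suc ((N + 1) div 2 - (N + 1) div M)) (\<gamma> [^] (N + 2))"
    using prod_of_commutators_twisted_even_period[OF assms(1,2) \<open>odd N\<close>] by (rule prod_of_commutators_untwist)
  ultimately show ?thesis
    by (simp add: n Suc_diff_le)
qed

lemma prod_of_commutators_odd_power_odd_period_low:
  assumes "odd M" "3 \<le> M" "n = r + 2 * M * j" "odd r" "r < M"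
  shows "prod_of_commutators G (n div 2 + 1 - n div M) (\<gamma> [^] n)"
proof -
  have "n = r + M * (2 * j)"
    using assms(3) by simp
  with assms(5) have nM: "n div M = 2 * j"
    by simp
  show ?thesis
  proof (cases "n = 1")
    case True
    then show ?thesis
      using nM assms(2) prod_of_commutators_commutator[OF a_closed b_closed] by simp
  next
    case False
    define N where "N = n - 2"
    have N: "n = Suc (Suc N)" "odd N"
      using assms(3,4) False by (auto simp: N_def elim!: oddE)
    have "Suc N = (r - 1) + (2 * M) * j"
      using assms(3,4) N(1) by (cases r) simp_all
    then have "Suc N div (2 * M) = j"
      using assms(5) by simp
    moreover have "Suc N div 2 = n div 2"
      using N by (auto elim!: oddE)
    moreover have "2 * 2 * j \<le> 2 * M * j"
      using assms(2) by simp
    then have "2 * j * 2 \<le> n"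
      using assms(3) by linarith
    then have "2 * j \<le> n div 2"
      by (simp add: less_eq_div_iff_mult_less_eq)
    moreover have "prod_of_commutators G (Suc ((N + 1) div 2 - 2 * ((N + 1) div (2 * M)))) (\<gamma> [^] (N + 2))"
      using prod_of_commutators_twisted_odd_period[OF assms(1,2) N(2)] by (rule prod_of_commutators_untwist)
    ultimately show ?thesis
      using nM by (simp add: N(1) Suc_diff_le)
  qed
qed

lemma prod_of_commutators_odd_power_odd_period_high:
  assumes "odd M" "3 \<le> M" "n = r + 2 * M * j" "odd r" "M \<le> r" "r < 2 * M"
  shows "prod_of_commutators G (n div 2 + 1 - n div M) (\<gamma> [^] n)"
proof -
  have nM: "n div M = 2 * j + 1"
    by (rule div_nat_eqI) (use assms(3,5,6) in \<open>simp_all add: algebra_simps\<close>)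
  show ?thesis
  proof (cases "n = M")
    case True
    have "prod_of_commutators G 0 (\<gamma> [^] (0::nat))"
      by (simp add: prod_of_commutators_one)
    from prod_of_commutators_power_add_odd_period[OF assms(1) this]
    show ?thesis
      using True nM assms(2) by simp
  next
    case False
    define N where "N = n - M - 1"
    have "even (r - M)"
      using assms(1,4,5) by simp
    then obtain u where u: "r - M = 2 * u" ..
    have N: "n = N + M + 1" "Suc N = 2 * u + (2 * M) * j"
      using assms(3,5) u False by (simp_all add: N_def)
    then have "even (Suc N)"
      by simp
    then have "odd N"
      by simp
    have "Suc N div (2 * M) = j"
      using u assms(6) by (simp add: N(2))
    moreover obtain b where M: "M = 2 * b + 1"
      using assms(1) by (rule oddE)
    then have "Suc N div 2 + M div 2 = n div 2"
      using assms(3,5) u by (simp add: N(2) algebra_simps)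
    moreover have "2 * j \<le> Suc N div 2"
    proof -
      have "2 * j \<le> M * j"
        using assms(2) by (intro mult_le_mono1) simp
      moreover have "Suc N div 2 = u + M * j"
        by (simp add: N(2))
      ultimately show ?thesis
        by linarith
    qed
    moreover have "prod_of_commutators G ((N + 1) div 2 - 2 * ((N + 1) div (2 * M)) + M div 2) (\<gamma> [^] (N + M + 1))"
      using prod_of_commutators_twisted_odd_period[OF assms(1,2) \<open>odd N\<close>]
      by (rule prod_of_commutators_untwist_odd_period[OF assms(1,2)])
    ultimately show ?thesis
      using nM by (simp add: N(1))
  qed
qed

lemma prod_of_commutators_odd_power_odd_period:
  assumes "odd M" "3 \<le> M" "odd n"
  shows "prod_of_commutators G (n div 2 + 1 - n div M) (\<gamma> [^] n)"
proof -
  define j r where "j = n div (2 * M)" and "r = n mod (2 * M)"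
  have "n = r + 2 * M * j" "r < 2 * M" "odd r"
    using assms by (simp_all add: j_def r_def odd_iff_mod_2_eq_one mod_mod_cancel)
  then show ?thesis
    using prod_of_commutators_odd_power_odd_period_low prod_of_commutators_odd_power_odd_period_high
      assms(1,2) by (cases "r < M") simp_all
qed

lemma prod_of_commutators_power_even_period:
  assumes "even M" "4 \<le> M"
  shows "prod_of_commutators G (n div 2 + 1 - n div M) (\<gamma> [^] n)"
proof (rule prod_of_commutators_power_by_cases)
  obtain h where M: "M = 2 * h" and "2 \<le> h"
    using assms by (auto elim!: evenE)
  have close: "prod_of_commutators G (k + M div 2) (\<gamma> [^] (N + e + M))"
    if "prod_of_commutators G k (\<gamma> [^] (N::nat) \<otimes> arc 0 (-1) [^] (e::nat))" for k N e
    using assms(2) by (intro prod_of_commutators_untwist_even_period[OF assms(1) _ that]) simp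
  show "prod_of_commutators G (M * Suc q div 2 + 1 - Suc q) (\<gamma> [^] (M * Suc q))" for q
  proof (cases q)
    case 0
    have "prod_of_commutators G 0 (\<gamma> [^] (0::nat) \<otimes> arc 0 (-1) [^] (0::nat))"
      by (simp add: prod_of_commutators_one)
    from close[OF this] show ?thesis
      using 0 M by simp
  next
    case (Suc q')
    define N where "N = M * Suc q' - 1"
    have N: "Suc N = M * Suc q'"
      using M \<open>2 \<le> h\<close> by (simp add: N_def)
    have "even (Suc N)"
      unfolding N M by simp
    then have "odd N"
      by simp
    have "prod_of_commutators G ((N + 1) div 2 - (N + 1) div M + M div 2) (\<gamma> [^] (N + 1 + M))"
      using close[of _ N 1] prod_of_commutators_twisted_even_period[OF assms \<open>odd N\<close>] by simp
    moreover have "M * Suc q = N + 1 + M" "(N + 1) div M = Suc q'" "(N + 1) div 2 = h * Suc q'"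
      "M * Suc q div 2 = h + h * Suc q'"
      using Suc M \<open>2 \<le> h\<close> by (simp_all add: N)
    moreover have "Suc q' \<le> h * Suc q'"
      using \<open>2 \<le> h\<close> mult_le_mono1[of 1 h "Suc q'"] by simp
    ultimately show ?thesis
      using M Suc by (simp add: add_ac)
  qed
qed (use assms prod_of_commutators_odd_power_even_period in simp_all)

lemma prod_of_commutators_power_odd_period:
  assumes "odd M" "3 \<le> M"
  shows "prod_of_commutators G (n div 2 + 1 - n div M) (\<gamma> [^] n)"
proof (rule prod_of_commutators_power_by_cases)
  show "prod_of_commutators G (M * Suc q div 2 + 1 - Suc q) (\<gamma> [^] (M * Suc q))"
    if "even (M * Suc q)" for q
  proof -
    have "odd (M * q)"
      using that assms(1) by simp
    from prod_of_commutators_power_add_odd_period[OF assms(1)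
        prod_of_commutators_odd_power_odd_period[OF assms this]]
    have "prod_of_commutators G (M * q div 2 + 1 - q + M div 2) (\<gamma> [^] (M * Suc q))"
      using assms(2) by (simp add: algebra_simps)
    moreover have "M * q div 2 + M div 2 + 1 = M * Suc q div 2"
      using \<open>odd (M * q)\<close> assms(1) by (auto simp: algebra_simps elim!: oddE)
    moreover have "q * 2 \<le> M * q"
      using assms(2) mult_le_mono1[of 2 M q] by (simp add: mult.commute)
    then have "q \<le> M * q div 2 + 1"
      by (simp add: less_eq_div_iff_mult_less_eq le_SucI)
    ultimately show ?thesis
      by simp
  qed
qed (use assms prod_of_commutators_odd_power_odd_period in simp_all)

lemma prod_of_commutators_power_period_two:
  assumes "M = 2"
  shows "prod_of_commutators G 1 (\<gamma> [^] (n::nat))"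
proof -
  have "arc 1 2 = \<gamma>"
    using arc_add_period[of 1 0] assms by (simp add: commutator_eq_arc)
  have "shift 1 \<gamma> = inv (arc 1 2)"
    by (simp add: shift_commutator inv_arc)
  then have shift_\<gamma>: "shift 1 \<gamma> = inv \<gamma>"
    using \<open>arc 1 2 = \<gamma>\<close> by simp
  have inv_shift_pow: "inv (shift 1 (\<gamma> [^] d)) = \<gamma> [^] d" for d :: nat
    by (simp add: shift_nat_pow shift_\<gamma> nat_pow_inv)
  obtain d where "n = 2 * d \<or> n = 2 * d + 1"
    by (metis oddE evenE)
  then show ?thesis
  proof
    assume n: "n = 2 * d"
    have "commutator G a (\<gamma> [^] d) = \<gamma> [^] n"
      by (simp add: commutator_a_left[of "\<gamma> [^] d"] inv_shift_pow n nat_pow_mult mult_2)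
    then show ?thesis
      using prod_of_commutators_commutator[of a "\<gamma> [^] d"] by simp
  next
    assume n: "n = 2 * d + 1"
    have "commutator G a (b \<otimes> \<gamma> [^] d) = \<gamma> [^] d \<otimes> arc 1 0 \<otimes> \<gamma> [^] d"
      by (simp add: commutator_a_left[of "b \<otimes> \<gamma> [^] d"] shift_mult inv_mult_group inv_shift_pow
          arc_def m_assoc)
    also have "\<dots> = \<gamma> [^] n"
      using nat_pow_split3[of \<gamma> n d 1 d] n by (simp flip: commutator_eq_arc)
    finally show ?thesis
      using prod_of_commutators_commutator[of a "b \<otimes> \<gamma> [^] d"] by simp
  qed
qed

lemma prod_of_commutators_power_torsion:
  assumes "2 \<le> M"
  shows "prod_of_commutators G (n div 2 + 1 - n div M) (\<gamma> [^] n)"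
proof -
  have "M = 2 \<or> even M \<and> 4 \<le> M \<or> odd M \<and> 3 \<le> M"
    using assms by presburger
  then consider "M = 2" | "even M" "4 \<le> M" | "odd M" "3 \<le> M"
    by blast
  then show ?thesis
  proof cases
    case 1
    then show ?thesis
      using prod_of_commutators_power_period_two by simp
  next
    case 2
    then show ?thesis
      by (rule prod_of_commutators_power_even_period)
  next
    case 3
    then show ?thesis
      by (rule prod_of_commutators_power_odd_period)
  qed
qed

end

theorem mainTheorem4:
  fixes G (structure) and a b :: 'a and n :: nat
  assumes "group G"
    and "a \<in> carrier G" and "b \<in> carrier G"
    and "a \<noteq> \<one>" and "b \<noteq> \<one>"
    and "n > 0"
  shows "int (commutator_length G (commutator G a b [^] n))
           \<le> int (n div 2) - int (n div group.ord G a) + 1"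
proof -
  interpret commutator_powers G a b
    using assms(1-3) by (simp add: commutator_powers_def commutator_powers_axioms_def)
  have "ord a \<noteq> 1"
    using assms(2,4) ord_eq_1 by blast
  have "prod_of_commutators G (n div 2 + 1 - n div ord a) (commutator G a b [^] n)"
  proof (cases "ord a = 0")
    case True
    then show ?thesis
      using prod_of_commutators_power by simp
  next
    case False
    interpret commutator_powers_torsion G a b "ord a"
      by unfold_locales (simp add: assms(2))
    show ?thesis
      using False \<open>ord a \<noteq> 1\<close> by (intro prod_of_commutators_power_torsion) simp
  qed
  moreover have "n div ord a \<le> n div 2"
    using \<open>ord a \<noteq> 1\<close> by (cases "ord a = 0") (simp_all add: div_le_mono2)
  ultimately show ?thesis
    using commutator_length_le by fastforce
qed

end
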